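(* Let $U$ be a finite ground set with $|U|=n$, partitioned as $\mathcal{P}=\{U_1,\dots,U_N\}$, let $f:2^U\to\mathbb{R}_{\ge0}$ be monotone submodular, and consider an FSM instance with budget $\kappa$ and bounds $\vec l,\vec u$; let $OPT=\arg\max_{S\in\mathcal{M}_{fair}(\mathcal{P},\kappa,\vec l,\vec u)}f(S)$. Let $\varepsilon\in(0,1)$ and let $\mathcal{M}_{1/\varepsilon}=\{S\subseteq U:|S\cap U_c|\le u_c/\varepsilon\ \forall c,\ \sum_c\max\{|S\cap U_c|,l_c/\varepsilon\}\le\kappa/\varepsilon\}$. Run the algorithm greedy-fairness-bi: start with $S=\emptyset$; while there exists $x\in U\setminus S$ with $S\cup\{x\}\in\mathcal{M}_{1/\varepsilon}$, add to $S$ an element $x$ maximizing $f(S\cup\{x\})-f(S)$ among such elements; output $S$. Then the output $S$ satisfies a $(1-\varepsilon,\frac1\varepsilon)$-bicriteria approximation guarantee, i.e. $f(S)\ge(1-\varepsilon)f(OPT)$, $|S\cap U_c|\le u_c/\varepsilon$ for all $c$, and $\sum_c\max\{|S\cap U_c|,l_c/\varepsilon\}\le\kappa/\varepsilon$; and the algorithm uses at most $O(n\kappa/\varepsilon)$ queries of $f$.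
   Context: Fairness matroid: $\mathcal{M}_{fair}(\mathcal{P},\kappa,\vec l,\vec u)=\{S\subseteq U: |S\cap U_c|\le u_c\ \forall c\in[N],\ \sum_{c\in[N]}\max\{|S\cap U_c|,l_c\}\le\kappa\}$. FSM: maximize $f(S)$ over $S\in\mathcal{M}_{fair}(\mathcal{P},\kappa,\vec l,\vec u)$, where it is assumed that $\sum_c u_c\ge\kappa$. *)

theory Defs
  imports Complex_Main
begin

text \<open>With integer bounds this is
  M_fair(P, kappa, l, u); with bounds divided by eps it is M_{1/eps}.\<close>
definition fair_sets ::
  "'a set \<Rightarrow> nat \<Rightarrow> (nat \<Rightarrow> 'a set) \<Rightarrow> real \<Rightarrow> (nat \<Rightarrow> real) \<Rightarrow> (nat \<Rightarrow> real) \<Rightarrow> 'a set set" where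
  "fair_sets U N Uc k l u =
     {S. S \<subseteq> U \<and> (\<forall>c<N. real (card (S \<inter> Uc c)) \<le> u c)
         \<and> (\<Sum>c<N. max (real (card (S \<inter> Uc c))) (l c)) \<le> k}"

definition is_partition :: "'a set \<Rightarrow> nat \<Rightarrow> (nat \<Rightarrow> 'a set) \<Rightarrow> bool" where
  "is_partition U N Uc \<longleftrightarrow>
     (\<Union>c<N. Uc c) = U \<and> (\<forall>c<N. Uc c \<noteq> {}) \<and>
     (\<forall>c<N. \<forall>d<N. c \<noteq> d \<longrightarrow> Uc c \<inter> Uc d = {})"

definition monotone_submodular :: "'a set \<Rightarrow> ('a set \<Rightarrow> real) \<Rightarrow> bool" where
  "monotone_submodular U f \<longleftrightarrow>
     (\<forall>A B. A \<subseteq> B \<and> B \<subseteq> U \<longrightarrow> f A \<le> f B) \<and>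
     (\<forall>A B x. A \<subseteq> B \<and> B \<subseteq> U \<and> x \<in> U - B \<longrightarrow>
        f (insert x B) - f B \<le> f (insert x A) - f A)"

text \<open>A complete run of the greedy algorithm over constraint family M:
  xs lists the elements added, in order; the set before step i is set (take i xs).
  The output is set xs.\<close>
definition greedy_run :: "'a set \<Rightarrow> 'a set set \<Rightarrow> ('a set \<Rightarrow> real) \<Rightarrow> 'a list \<Rightarrow> bool" where
  "greedy_run U M f xs \<longleftrightarrow>
     (\<forall>i<length xs.
        xs ! i \<in> U - set (take i xs) \<and>
        insert (xs ! i) (set (take i xs)) \<in> M \<and>
        (\<forall>y\<in>U - set (take i xs). insert y (set (take i xs)) \<in> M \<longrightarrow>
           f (insert y (set (take i xs))) - f (set (take i xs))
             \<le> f (insert (xs ! i) (set (take i xs))) - f (set (take i xs)))) \<and>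
     \<not> (\<exists>x\<in>U - set xs. insert x (set xs) \<in> M)"

text \<open>Number of value queries of f made by the run: in iteration i the algorithm
  evaluates f(S) and f(S \<union> {x}) for the candidates x \<in> U - S (an upper bound on
  the candidates actually examined).\<close>
definition greedy_queries :: "'a set \<Rightarrow> 'a list \<Rightarrow> nat" where
  "greedy_queries U xs = (\<Sum>i<length xs. card (U - set (take i xs)) + 1)"

end

theory Submission
  imports Defs
begin

text \<open>Let S_0, S_1, ..., S_m = S be the prefixes of the greedy run.  Since the relaxed
  family is downward closed and f is submodular, the greedy gains f S_(i+1) - f S_i are
  nonincreasing.  Rank an element z of a fair set T missed by the run by the last prefix to
  which it could still be added; its marginal value at S is at most the greedy gain of that
  step.  The relaxed bounds exceed the fair ones by the factor 1/\<epsilon>, and a blockwise count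
  shows that a prefix of size t blocks at most \<epsilon> t / (1 - \<epsilon>) elements of T.  Abel
  summation then bounds the total marginal value of the missed elements by
  \<epsilon> / (1 - \<epsilon>) f S, so f T \<le> f S / (1 - \<epsilon>).  Feasibility of S holds by construction,
  and each of the at most \<kappa>/\<epsilon> iterations makes at most |U| + 1 queries.\<close>

lemma fair_sets_downward_closed:
  assumes "A \<in> fair_sets U N Uc k l u" "B \<subseteq> A" "finite U"
  shows "B \<in> fair_sets U N Uc k l u"
proof -
  have "finite A" using assms(1,3) finite_subset by (auto simp: fair_sets_def)
  then have card_le: "card (B \<inter> Uc c) \<le> card (A \<inter> Uc c)" for c
    using assms(2) by (intro card_mono) auto
  have "(\<Sum>c<N. max (real (card (B \<inter> Uc c))) (l c))
      \<le> (\<Sum>c<N. max (real (card (A \<inter> Uc c))) (l c))"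
    using card_le by (intro sum_mono max.mono) auto
  moreover have "real (card (B \<inter> Uc c)) \<le> u c" if "c < N" for c
    using assms(1) that card_le[of c] by (auto simp: fair_sets_def intro: order_trans[OF of_nat_mono])
  ultimately show ?thesis
    using assms(1,2) unfolding fair_sets_def by auto
qed

lemma fair_sets_scale:
  fixes \<epsilon> :: real
  assumes "A \<in> fair_sets U N Uc k l u" "0 < \<epsilon>" "\<epsilon> \<le> 1"
  shows "A \<in> fair_sets U N Uc (k / \<epsilon>) (\<lambda>c. l c / \<epsilon>) (\<lambda>c. u c / \<epsilon>)"
proof -
  have scale: "x \<le> x / \<epsilon>" if "0 \<le> x" for x :: real
    using assms(2,3) that by (simp add: le_divide_eq mult_left_le)
  have "max x (y / \<epsilon>) \<le> max x y / \<epsilon>" if "0 \<le> x" for x y :: real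
    using scale[OF that] divide_right_mono[of x y \<epsilon>] divide_right_mono[of y x \<epsilon>] assms(2)
    by (auto simp: max_def)
  then have "(\<Sum>c<N. max (real (card (A \<inter> Uc c))) (l c / \<epsilon>))
      \<le> (\<Sum>c<N. max (real (card (A \<inter> Uc c))) (l c)) / \<epsilon>"
    by (simp add: sum_divide_distrib sum_mono)
  also have "\<dots> \<le> k / \<epsilon>"
    using assms(1,2) by (intro divide_right_mono) (auto simp: fair_sets_def)
  finally have "(\<Sum>c<N. max (real (card (A \<inter> Uc c))) (l c / \<epsilon>)) \<le> k / \<epsilon>" .
  moreover have "real (card (A \<inter> Uc c)) \<le> u c / \<epsilon>" if "c < N" for c
  proof -
    have "real (card (A \<inter> Uc c)) \<le> u c" using assms(1) that by (simp add: fair_sets_def)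
    then have "real (card (A \<inter> Uc c)) / \<epsilon> \<le> u c / \<epsilon>"
      using assms(2) by (simp add: divide_right_mono)
    then show ?thesis using scale[of "real (card (A \<inter> Uc c))"] by linarith
  qed
  ultimately show ?thesis using assms(1) by (simp add: fair_sets_def)
qed

lemma card_eq_sum_blocks:
  assumes "is_partition U N Uc" "finite A" "A \<subseteq> U"
  shows "card A = (\<Sum>c<N. card (A \<inter> Uc c))"
proof -
  have "A = (\<Union>c<N. A \<inter> Uc c)"
    using assms(1,3) unfolding is_partition_def by blast
  also have "card \<dots> = (\<Sum>c<N. card (A \<inter> Uc c))"
    using assms(1,2) unfolding is_partition_def by (intro card_UN_disjoint) auto
  finally show ?thesis .
qed

lemma card_le_of_fair_sets:
  assumes "A \<in> fair_sets U N Uc k l u" "is_partition U N Uc" "finite U"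
  shows "real (card A) \<le> k"
proof -
  have "A \<subseteq> U" using assms(1) by (simp add: fair_sets_def)
  moreover from this have "finite A" using assms(3) finite_subset by blast
  ultimately have "real (card A) = (\<Sum>c<N. real (card (A \<inter> Uc c)))"
    using card_eq_sum_blocks[OF assms(2)] by simp
  also have "\<dots> \<le> (\<Sum>c<N. max (real (card (A \<inter> Uc c))) (l c))"
    by (intro sum_mono) simp
  also have "\<dots> \<le> k" using assms(1) by (simp add: fair_sets_def)
  finally show ?thesis .
qed

lemma card_insert_Int_block:
  assumes "is_partition U N Uc" "c < N" "d < N" "z \<in> Uc c" "z \<notin> A" "finite A"
  shows "card (insert z A \<inter> Uc d) = card (A \<inter> Uc d) + (if d = c then 1 else 0)"
proof (cases "d = c")
  case True
  then have "insert z A \<inter> Uc d = insert z (A \<inter> Uc d)" using assms(4) by auto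
  then show ?thesis using True assms(5,6) by simp
next
  case False
  then have "Uc c \<inter> Uc d = {}" using assms(1-3) by (simp add: is_partition_def)
  then have "z \<notin> Uc d" using assms(4) by blast
  then show ?thesis using False by simp
qed

lemma slack_le_of_excess:
  fixes \<epsilon> s b t l :: real
  assumes "0 < \<epsilon>" "0 \<le> b" "b \<le> t" "(1 / \<epsilon> - 1) * b \<le> s"
  shows "max s (l / \<epsilon>) \<le> s - (1 / \<epsilon> - 1) * b + max t l / \<epsilon>"
proof -
  have "(1 / \<epsilon> - 1) * b \<le> b / \<epsilon>" using assms(2) by (simp add: algebra_simps)
  also have "\<dots> \<le> max t l / \<epsilon>" using assms(1,3) by (simp add: divide_right_mono)
  finally have "(1 / \<epsilon> - 1) * b \<le> max t l / \<epsilon>" .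
  moreover have "l / \<epsilon> \<le> max t l / \<epsilon>" using assms(1) by (simp add: divide_right_mono)
  ultimately show ?thesis using assms(4) by simp
qed

lemma slack_le_of_budget_blocked:
  fixes \<epsilon> s b t l :: real
  assumes "0 < \<epsilon>" "1 \<le> b" "b \<le> t" "l / \<epsilon> < s + 1"
  shows "max (s + 1) (l / \<epsilon>) \<le> s - (1 / \<epsilon> - 1) * b + max t l / \<epsilon>"
proof -
  have "1 + (1 / \<epsilon> - 1) * b \<le> b / \<epsilon>" using assms(2) by (simp add: algebra_simps)
  also have "\<dots> \<le> max t l / \<epsilon>" using assms(1,3) by (simp add: divide_right_mono)
  finally show ?thesis using assms(4) by simp
qed

lemma excess_le_of_capacity_blocked:
  fixes \<epsilon> s b t u :: real
  assumes "0 < \<epsilon>" "1 \<le> b" "b \<le> t" "t \<le> u" "u / \<epsilon> < s + 1"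
  shows "(1 / \<epsilon> - 1) * b \<le> s"
proof -
  have "b / \<epsilon> \<le> u / \<epsilon>" using assms(1,3,4) by (simp add: divide_right_mono)
  then show ?thesis using assms(2,5) by (simp add: algebra_simps)
qed

lemma slack_le_of_blocked:
  fixes \<epsilon> l u :: real and s b t :: nat
  assumes "0 < \<epsilon>" "b \<le> t" "t \<le> u" and "b = 0 \<or> u / \<epsilon> < s + 1 \<or> l / \<epsilon> < s + 1"
  shows "max (real s) (l / \<epsilon>) \<le> s - (1 / \<epsilon> - 1) * b + max (real t) l / \<epsilon>"
proof (cases "b = 0 \<or> u / \<epsilon> < s + 1")
  case True
  have "(1 / \<epsilon> - 1) * b \<le> s"
  proof (cases "b = 0")
    case False
    with True show ?thesis using assms(2,3) by (intro excess_le_of_capacity_blocked[OF assms(1)]) auto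
  qed simp
  then show ?thesis using assms(1,2) by (intro slack_le_of_excess) auto
next
  case False
  then have "max (real s + 1) (l / \<epsilon>) \<le> s - (1 / \<epsilon> - 1) * b + max (real t) l / \<epsilon>"
    using assms by (intro slack_le_of_budget_blocked) auto
  then show ?thesis by simp
qed

lemma room_of_budget_blocked:
  fixes L :: "nat \<Rightarrow> real" and s :: "nat \<Rightarrow> nat"
  assumes "(\<Sum>d<N. max (real (s d)) (L d)) \<le> K"
    and "K < (\<Sum>d<N. max (real (s d + (if d = c then 1 else 0))) (L d))"
  shows "L c < s c + 1"
proof (rule ccontr)
  assume "\<not> L c < s c + 1"
  then have "(\<Sum>d<N. max (real (s d + (if d = c then 1 else 0))) (L d))
      = (\<Sum>d<N. max (real (s d)) (L d))"
    by (intro sum.cong) auto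
  then show False using assms by simp
qed

text \<open>In block d, a relaxed-feasible A holds s d elements and a fair T holds t d, of which
  b d are missing from A and cannot be added to it.  Once a single block c is blocked by the
  budget, A uses up the whole relaxed budget, which is 1/\<epsilon> times the budget of T.\<close>
lemma blocked_count_le_of_budget_blocked:
  fixes \<epsilon> \<kappa> :: real and s b t :: "nat \<Rightarrow> nat" and l u :: "nat \<Rightarrow> real"
  assumes eps: "0 < \<epsilon>"
    and s_budget: "(\<Sum>d<N. max (real (s d)) (l d / \<epsilon>)) \<le> \<kappa> / \<epsilon>"
    and t_cap: "\<forall>d<N. real (t d) \<le> u d"
    and t_budget: "(\<Sum>d<N. max (real (t d)) (l d)) \<le> \<kappa>"
    and b_le: "\<forall>d<N. b d \<le> t d"
    and blocked: "\<forall>d<N. 0 < b d \<longrightarrow> u d / \<epsilon> < real (s d) + 1 \<or>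
        \<kappa> / \<epsilon> < (\<Sum>e<N. max (real (s e + (if e = d then 1 else 0))) (l e / \<epsilon>))"
    and c: "c < N" "0 < b c"
    and over: "\<kappa> / \<epsilon> < (\<Sum>d<N. max (real (s d + (if d = c then 1 else 0))) (l d / \<epsilon>))"
  shows "(1 / \<epsilon> - 1) * real (\<Sum>d<N. b d) \<le> real (\<Sum>d<N. s d)"
proof -
  define slack where "slack d = s d - (1 / \<epsilon> - 1) * b d + max (real (t d)) (l d) / \<epsilon>" for d
  have "max (real (s d + (if d = c then 1 else 0))) (l d / \<epsilon>) \<le> slack d" if d: "d < N" for d
  proof (cases "d = c")
    case True
    have "max (real (s c) + 1) (l c / \<epsilon>) \<le> slack c"
      unfolding slack_def using eps b_le c room_of_budget_blocked[OF s_budget over]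
      by (intro slack_le_of_budget_blocked) auto
    then show ?thesis using True by simp
  next
    case False
    have "b d = 0 \<or> u d / \<epsilon> < s d + 1 \<or> l d / \<epsilon> < s d + 1"
      using blocked[rule_format, OF d] room_of_budget_blocked[OF s_budget, of d] by auto
    then have "max (real (s d)) (l d / \<epsilon>) \<le> slack d"
      unfolding slack_def using b_le t_cap d by (intro slack_le_of_blocked[OF eps]) auto
    then show ?thesis using False by simp
  qed
  then have "(\<Sum>d<N. max (real (s d + (if d = c then 1 else 0))) (l d / \<epsilon>))
      \<le> (\<Sum>d<N. slack d)"
    by (intro sum_mono) simp
  with over have "\<kappa> / \<epsilon> < (\<Sum>d<N. slack d)" by linarith
  also have "\<dots> = real (\<Sum>d<N. s d) - (1 / \<epsilon> - 1) * real (\<Sum>d<N. b d)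
      + (\<Sum>d<N. max (real (t d)) (l d)) / \<epsilon>"
    by (simp add: slack_def sum.distrib sum_subtractf sum_distrib_left sum_divide_distrib)
  finally show ?thesis using divide_right_mono[OF t_budget, of \<epsilon>] eps by simp
qed

lemma blocked_count_le:
  fixes \<epsilon> \<kappa> :: real and s b t :: "nat \<Rightarrow> nat" and l u :: "nat \<Rightarrow> real"
  assumes eps: "0 < \<epsilon>"
    and s_budget: "(\<Sum>d<N. max (real (s d)) (l d / \<epsilon>)) \<le> \<kappa> / \<epsilon>"
    and t_cap: "\<forall>d<N. real (t d) \<le> u d"
    and t_budget: "(\<Sum>d<N. max (real (t d)) (l d)) \<le> \<kappa>"
    and b_le: "\<forall>d<N. b d \<le> t d"
    and blocked: "\<forall>d<N. 0 < b d \<longrightarrow> u d / \<epsilon> < real (s d) + 1 \<or>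
        \<kappa> / \<epsilon> < (\<Sum>e<N. max (real (s e + (if e = d then 1 else 0))) (l e / \<epsilon>))"
  shows "(1 / \<epsilon> - 1) * real (\<Sum>d<N. b d) \<le> real (\<Sum>d<N. s d)"
proof (cases "\<exists>c<N. 0 < b c \<and>
    \<kappa> / \<epsilon> < (\<Sum>d<N. max (real (s d + (if d = c then 1 else 0))) (l d / \<epsilon>))")
  case True
  then show ?thesis
    using blocked_count_le_of_budget_blocked[OF eps s_budget t_cap t_budget b_le blocked] by blast
next
  case False
  have "(1 / \<epsilon> - 1) * b d \<le> s d" if d: "d < N" for d
  proof (cases "b d = 0")
    case False
    then have "u d / \<epsilon> < s d + 1" using blocked[rule_format, OF d] \<open>\<not> (\<exists>c<N. _)\<close> d by auto
    then show ?thesis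
      using False b_le t_cap d excess_le_of_capacity_blocked[OF eps, of "b d" "t d" "u d" "s d"]
      by auto
  qed simp
  then have "(\<Sum>d<N. (1 / \<epsilon> - 1) * b d) \<le> (\<Sum>d<N. real (s d))" by (intro sum_mono) simp
  then show ?thesis by (simp add: sum_distrib_left)
qed

lemma insert_not_in_fair_sets:
  assumes part: "is_partition U N Uc" and A: "A \<in> fair_sets U N Uc k l u" "finite A"
    and z: "z \<in> U" "z \<in> Uc c" "z \<notin> A" "c < N"
    and blocked: "insert z A \<notin> fair_sets U N Uc k l u"
  shows "u c < real (card (A \<inter> Uc c)) + 1 \<or>
    k < (\<Sum>d<N. max (real (card (A \<inter> Uc d) + (if d = c then 1 else 0))) (l d))"
proof -
  have card_ins: "card (insert z A \<inter> Uc d) = card (A \<inter> Uc d) + (if d = c then 1 else 0)"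
    if "d < N" for d
    using card_insert_Int_block[OF part z(4) that z(2,3) A(2)] .
  have "insert z A \<subseteq> U" using A(1) z(1) by (simp add: fair_sets_def)
  then have "(\<exists>d<N. u d < real (card (insert z A \<inter> Uc d))) \<or>
      k < (\<Sum>d<N. max (real (card (insert z A \<inter> Uc d))) (l d))"
    using blocked by (auto simp: fair_sets_def not_le)
  then show ?thesis
  proof
    assume "\<exists>d<N. u d < real (card (insert z A \<inter> Uc d))"
    then obtain d where d: "d < N" "u d < real (card (insert z A \<inter> Uc d))" by blast
    moreover have "real (card (A \<inter> Uc d)) \<le> u d" using A(1) d(1) by (simp add: fair_sets_def)
    ultimately have "d = c" using card_ins[OF d(1)] by (auto split: if_splits)
    then show ?thesis using d card_ins by simp
  next
    assume "k < (\<Sum>d<N. max (real (card (insert z A \<inter> Uc d))) (l d))"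
    moreover have "(\<Sum>d<N. max (real (card (insert z A \<inter> Uc d))) (l d))
        = (\<Sum>d<N. max (real (card (A \<inter> Uc d) + (if d = c then 1 else 0))) (l d))"
      using card_ins by (intro sum.cong) auto
    ultimately show ?thesis by simp
  qed
qed

lemma card_blocked_le:
  fixes U :: "'a set" and N :: nat and Uc :: "nat \<Rightarrow> 'a set"
    and \<epsilon> \<kappa> :: real and l u :: "nat \<Rightarrow> real"
  defines "M \<equiv> fair_sets U N Uc (\<kappa> / \<epsilon>) (\<lambda>c. l c / \<epsilon>) (\<lambda>c. u c / \<epsilon>)"
  assumes part: "is_partition U N Uc" and fin: "finite U" and eps: "0 < \<epsilon>"
    and A: "A \<in> M" and T: "T \<in> fair_sets U N Uc \<kappa> l u"
    and B: "B \<subseteq> T - A" and blocked: "\<forall>z\<in>B. insert z A \<notin> M"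
  shows "(1 / \<epsilon> - 1) * card B \<le> card A"
proof -
  have AU: "A \<subseteq> U" and TU: "T \<subseteq> U" using A T by (auto simp: M_def fair_sets_def)
  then have finA: "finite A" and finT: "finite T" using fin finite_subset by auto
  have BU: "B \<subseteq> U" and finB: "finite B" using B TU finT by (auto intro: finite_subset)
  have "(1 / \<epsilon> - 1) * real (\<Sum>c<N. card (B \<inter> Uc c)) \<le> real (\<Sum>c<N. card (A \<inter> Uc c))"
  proof (rule blocked_count_le[OF eps])
    show "(\<Sum>c<N. max (real (card (A \<inter> Uc c))) (l c / \<epsilon>)) \<le> \<kappa> / \<epsilon>"
      using A by (simp add: M_def fair_sets_def)
    show "\<forall>c<N. real (card (T \<inter> Uc c)) \<le> u c"
      and "(\<Sum>c<N. max (real (card (T \<inter> Uc c))) (l c)) \<le> \<kappa>"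
      using T by (simp_all add: fair_sets_def)
    show "\<forall>c<N. card (B \<inter> Uc c) \<le> card (T \<inter> Uc c)"
      using B finT by (auto intro: card_mono)
    show "\<forall>c<N. 0 < card (B \<inter> Uc c) \<longrightarrow> u c / \<epsilon> < real (card (A \<inter> Uc c)) + 1 \<or>
        \<kappa> / \<epsilon> < (\<Sum>d<N. max (real (card (A \<inter> Uc d) + (if d = c then 1 else 0))) (l d / \<epsilon>))"
    proof (intro allI impI)
      fix c assume c: "c < N" "0 < card (B \<inter> Uc c)"
      then obtain z where z: "z \<in> B" "z \<in> Uc c" by (auto simp: card_gt_0_iff)
      then have "z \<in> U" "z \<notin> A" "insert z A \<notin> M" using B BU blocked by auto
      then show "u c / \<epsilon> < real (card (A \<inter> Uc c)) + 1 \<or>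
          \<kappa> / \<epsilon> < (\<Sum>d<N. max (real (card (A \<inter> Uc d) + (if d = c then 1 else 0))) (l d / \<epsilon>))"
        using insert_not_in_fair_sets[OF part A[unfolded M_def] finA _ z(2) _ c(1)]
        by (simp add: M_def)
    qed
  qed
  then show ?thesis
    using card_eq_sum_blocks[OF part finA AU] card_eq_sum_blocks[OF part finB BU] by simp
qed

lemma monotone_submodular_mono:
  "monotone_submodular U f \<Longrightarrow> A \<subseteq> B \<Longrightarrow> B \<subseteq> U \<Longrightarrow> f A \<le> f B"
  unfolding monotone_submodular_def by blast

lemma monotone_submodular_diminishing:
  "monotone_submodular U f \<Longrightarrow> A \<subseteq> B \<Longrightarrow> B \<subseteq> U \<Longrightarrow> x \<in> U - B \<Longrightarrow>
    f (insert x B) - f B \<le> f (insert x A) - f A"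
  unfolding monotone_submodular_def by blast

lemma monotone_submodular_union_le:
  assumes "monotone_submodular U f" "finite A" "A \<subseteq> U" "S \<subseteq> U"
  shows "f (S \<union> A) \<le> f S + (\<Sum>a\<in>A - S. f (insert a S) - f S)"
  using assms(2,3)
proof (induction A rule: finite_induct)
  case empty
  then show ?case by simp
next
  case (insert x F)
  show ?case
  proof (cases "x \<in> S")
    case True
    then have "S \<union> insert x F = S \<union> F" "insert x F - S = F - S" by auto
    then show ?thesis using insert by simp
  next
    case False
    have "f (insert x (S \<union> F)) - f (S \<union> F) \<le> f (insert x S) - f S"
      using insert False assms(4) by (intro monotone_submodular_diminishing[OF assms(1)]) auto
    moreover have "(\<Sum>a\<in>insert x F - S. f (insert a S) - f S)
        = f (insert x S) - f S + (\<Sum>a\<in>F - S. f (insert a S) - f S)"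
      using False insert.hyps by (simp add: insert_Diff_if)
    ultimately show ?thesis using insert by simp
  qed
qed

text \<open>Abel summation against the counts of ranks below each t.\<close>
lemma sum_antimono_at_ranks_le:
  fixes \<delta> :: "nat \<Rightarrow> real" and g :: "'b \<Rightarrow> nat" and r :: real
  assumes B: "finite B" "\<forall>b\<in>B. g b < m"
    and anti: "\<And>i. Suc i < m \<Longrightarrow> \<delta> (Suc i) \<le> \<delta> i"
    and nonneg: "\<And>i. i < m \<Longrightarrow> 0 \<le> \<delta> i"
    and ranks: "\<And>t. t \<le> m \<Longrightarrow> r * card {b\<in>B. g b < t} \<le> t"
  shows "r * (\<Sum>b\<in>B. \<delta> (g b)) \<le> (\<Sum>i<m. \<delta> i)"
proof -
  define D where "D j = (if j < m then \<delta> j else 0)" for j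
  define e where "e j = D j - D (Suc j)" for j
  have e_nonneg: "0 \<le> e j" for j
    using anti nonneg unfolding e_def D_def by (cases "Suc j < m") auto
  have abel: "(\<Sum>j<n. e j * Suc j) = (\<Sum>j<n. D j) - n * D n" for n
    unfolding e_def by (induction n) (auto simp: algebra_simps)
  have "\<delta> (g b) = (\<Sum>j<m. if g b \<le> j then e j else 0)" if "b \<in> B" for b
  proof -
    have "g b < m" using B(2) that by blast
    have "(\<Sum>j<m. if g b \<le> j then e j else 0) = (\<Sum>j\<in>{g b..<m}. e j)"
      by (rule sum.mono_neutral_cong_right) auto
    also have "\<dots> = D (g b) - D m"
      using sum_Suc_diff'[of "g b" m "\<lambda>j. - D j"] \<open>g b < m\<close> unfolding e_def by simp
    finally show ?thesis using \<open>g b < m\<close> by (simp add: D_def)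
  qed
  then have "(\<Sum>b\<in>B. \<delta> (g b)) = (\<Sum>j<m. \<Sum>b\<in>B. if g b \<le> j then e j else 0)"
    by (simp add: sum.swap[of _ B])
  also have "\<dots> = (\<Sum>j<m. e j * card {b\<in>B. g b < Suc j})"
    using B(1) by (intro sum.cong)
      (auto simp: sum.If_cases less_Suc_eq_le intro!: arg_cong[where f = card])
  finally have "r * (\<Sum>b\<in>B. \<delta> (g b)) = (\<Sum>j<m. e j * (r * card {b\<in>B. g b < Suc j}))"
    by (simp add: sum_distrib_left algebra_simps)
  also have "\<dots> \<le> (\<Sum>j<m. e j * Suc j)"
    using ranks[of "Suc _"] e_nonneg by (intro sum_mono mult_left_mono) (auto simp del: of_nat_Suc)
  also have "\<dots> = (\<Sum>i<m. \<delta> i)"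
    unfolding abel by (simp add: D_def)
  finally show ?thesis .
qed

definition greedy_gain :: "('a set \<Rightarrow> real) \<Rightarrow> 'a list \<Rightarrow> nat \<Rightarrow> real" where
  "greedy_gain f xs i = f (set (take (Suc i) xs)) - f (set (take i xs))"

lemma set_take_Suc_nth:
  "i < length xs \<Longrightarrow> set (take (Suc i) xs) = insert (xs ! i) (set (take i xs))"
  by (simp add: take_Suc_conv_app_nth)

lemma greedy_runD:
  assumes "greedy_run U M f xs" "i < length xs"
  shows "xs ! i \<in> U - set (take i xs)"
    and "insert (xs ! i) (set (take i xs)) \<in> M"
    and "\<And>y. y \<in> U - set (take i xs) \<Longrightarrow> insert y (set (take i xs)) \<in> M \<Longrightarrow>
      f (insert y (set (take i xs))) \<le> f (insert (xs ! i) (set (take i xs)))"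
  using assms unfolding greedy_run_def by fastforce+

lemma greedy_run_maximal:
  "greedy_run U M f xs \<Longrightarrow> x \<in> U - set xs \<Longrightarrow> insert x (set xs) \<notin> M"
  unfolding greedy_run_def by blast

lemma greedy_run_subset:
  assumes "greedy_run U M f xs"
  shows "set xs \<subseteq> U"
proof
  fix x assume "x \<in> set xs"
  then obtain i where "i < length xs" "x = xs ! i" by (auto simp: in_set_conv_nth)
  then show "x \<in> U" using greedy_runD(1)[OF assms] by blast
qed

lemma greedy_run_distinct:
  assumes "greedy_run U M f xs"
  shows "distinct xs"
proof -
  have "xs ! i \<noteq> xs ! j" if "i < j" "j < length xs" for i j
  proof -
    have "xs ! i \<in> set (take j xs)" using that by (auto simp: in_set_conv_nth)
    then show ?thesis using greedy_runD(1)[OF assms that(2)] by auto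
  qed
  then show ?thesis unfolding distinct_conv_nth by (metis linorder_neqE_nat)
qed

lemma greedy_run_prefix_in:
  assumes "greedy_run U M f xs" "{} \<in> M" "i \<le> length xs"
  shows "set (take i xs) \<in> M"
proof (cases i)
  case (Suc j)
  then show ?thesis
    using assms greedy_runD(2)[OF assms(1)] set_take_Suc_nth[of j xs] by simp
qed (use assms in simp)

lemma greedy_gain_nonneg:
  assumes "monotone_submodular U f" "greedy_run U M f xs"
  shows "0 \<le> greedy_gain f xs i"
proof -
  have "set (take (Suc i) xs) \<subseteq> U"
    using greedy_run_subset[OF assms(2)] set_take_subset by fastforce
  then show ?thesis unfolding greedy_gain_def
    using monotone_submodular_mono[OF assms(1)] set_take_subset_set_take[of i "Suc i" xs] by force
qed

lemma greedy_gain_ge: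
  assumes ms: "monotone_submodular U f" and gr: "greedy_run U M f xs"
    and ij: "i \<le> j" "i < length xs"
    and z: "z \<in> U - set (take j xs)" "insert z (set (take i xs)) \<in> M"
  shows "f (insert z (set (take j xs))) - f (set (take j xs)) \<le> greedy_gain f xs i"
proof -
  have "set (take i xs) \<subseteq> set (take j xs)" "set (take j xs) \<subseteq> U"
    using ij greedy_run_subset[OF gr] set_take_subset[of j xs]
    by (auto simp: set_take_subset_set_take)
  then have "f (insert z (set (take j xs))) - f (set (take j xs))
      \<le> f (insert z (set (take i xs))) - f (set (take i xs))"
    using z(1) by (rule monotone_submodular_diminishing[OF ms])
  also have "\<dots> \<le> greedy_gain f xs i"
    using greedy_runD(3)[OF gr ij(2)] z ij set_take_subset_set_take[OF ij(1), of xs]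
    by (auto simp: greedy_gain_def set_take_Suc_nth)
  finally show ?thesis .
qed

lemma greedy_gain_antimono:
  assumes ms: "monotone_submodular U f" and gr: "greedy_run U M f xs"
    and down: "\<And>A B. A \<in> M \<Longrightarrow> B \<subseteq> A \<Longrightarrow> B \<in> M" and i: "Suc i < length xs"
  shows "greedy_gain f xs (Suc i) \<le> greedy_gain f xs i"
proof -
  let ?z = "xs ! Suc i"
  have "insert ?z (set (take i xs)) \<subseteq> set (take (Suc (Suc i)) xs)"
    using i by (auto simp: set_take_Suc_nth)
  moreover have "set (take (Suc (Suc i)) xs) \<in> M"
    using greedy_runD(2)[OF gr i] i by (simp add: set_take_Suc_nth)
  ultimately have "insert ?z (set (take i xs)) \<in> M" by (rule down[rotated])
  then have "f (insert ?z (set (take (Suc i) xs))) - f (set (take (Suc i) xs)) \<le> greedy_gain f xs i"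
    using greedy_runD(1)[OF gr i] i by (intro greedy_gain_ge[OF ms gr]) auto
  then show ?thesis using i by (simp add: greedy_gain_def set_take_Suc_nth)
qed

lemma sum_greedy_gain:
  "(\<Sum>i<length xs. greedy_gain f xs i) = f (set xs) - f {}"
  using sum_lessThan_telescope[of "\<lambda>i. f (set (take i xs))" "length xs"]
  by (simp add: greedy_gain_def)

text \<open>The rank g z is the last step at which z could still be added.  Elements of rank
  below t are blocked by the prefix of length t, so the exchange hypothesis applies.\<close>
lemma greedy_run_blocking_ranks:
  fixes r :: real
  assumes gr: "greedy_run U M f xs"
    and down: "\<And>A B. A \<in> M \<Longrightarrow> B \<subseteq> A \<Longrightarrow> B \<in> M" and empty: "{} \<in> M"
    and r: "0 < r"
    and exchange: "\<And>A B. A \<in> M \<Longrightarrow> B \<subseteq> T - A \<Longrightarrow> \<forall>z\<in>B. insert z A \<notin> M \<Longrightarrow>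
      r * card B \<le> card A"
    and T: "T \<subseteq> U"
  obtains g where "\<forall>z\<in>T - set xs. g z < length xs \<and> insert z (set (take (g z) xs)) \<in> M"
    and "\<And>t. t \<le> length xs \<Longrightarrow> r * card {z\<in>T - set xs. g z < t} \<le> t"
proof -
  define m where "m = length xs"
  define S where "S t = set (take t xs)" for t
  define B where "B = T - set xs"
  define \<tau> where "\<tau> z = (LEAST t. insert z (S t) \<notin> M)" for z
  have blocked_end: "insert z (S m) \<notin> M" if "z \<in> B" for z
    using greedy_run_maximal[OF gr] that T by (auto simp: S_def m_def B_def)
  have \<tau>_le: "\<tau> z \<le> m" if "z \<in> B" for z
    unfolding \<tau>_def by (rule Least_le) (rule blocked_end[OF that])
  have \<tau>_blocked: "insert z (S (\<tau> z)) \<notin> M" if "z \<in> B" for z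
    unfolding \<tau>_def by (rule LeastI) (rule blocked_end[OF that])
  have \<tau>_feasible: "insert z (S t) \<in> M" if "t < \<tau> z" for z t
    using not_less_Least[OF that[unfolded \<tau>_def]] by simp
  have count: "r * card {z\<in>B. \<tau> z \<le> t} \<le> t" if t: "t \<le> m" for t
  proof -
    have "insert z (S t) \<notin> M" if "z \<in> B" "\<tau> z \<le> t" for z
    proof
      assume "insert z (S t) \<in> M"
      moreover have "insert z (S (\<tau> z)) \<subseteq> insert z (S t)"
        using set_take_subset_set_take[OF that(2), of xs] by (auto simp: S_def)
      ultimately show False using down \<tau>_blocked[OF that(1)] by blast
    qed
    moreover have "{z\<in>B. \<tau> z \<le> t} \<subseteq> T - S t"
      using set_take_subset[of t xs] by (auto simp: B_def S_def)
    ultimately have "r * card {z\<in>B. \<tau> z \<le> t} \<le> card (S t)"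
      using greedy_run_prefix_in[OF gr empty] t by (intro exchange) (auto simp: S_def m_def)
    also have "card (S t) = t"
      using greedy_run_distinct[OF gr] t by (simp add: S_def m_def distinct_card)
    finally show ?thesis .
  qed
  have \<tau>_pos: "0 < \<tau> z" if "z \<in> B" for z
  proof (rule ccontr)
    assume "\<not> 0 < \<tau> z"
    then have "insert z {} \<notin> M" using \<tau>_blocked[OF that] by (simp add: S_def)
    then have "r * card {z} \<le> card ({} :: 'a set)"
      using that by (intro exchange[OF empty]) (auto simp: B_def)
    then show False using r by simp
  qed
  show thesis
  proof (rule that[of "\<lambda>z. \<tau> z - 1"])
    show "\<forall>z\<in>T - set xs. \<tau> z - 1 < length xs \<and> insert z (set (take (\<tau> z - 1) xs)) \<in> M"
    proof
      fix z assume "z \<in> T - set xs"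
      then have "\<tau> z - 1 < \<tau> z" "\<tau> z \<le> m" using \<tau>_pos \<tau>_le by (auto simp: B_def)
      then show "\<tau> z - 1 < length xs \<and> insert z (set (take (\<tau> z - 1) xs)) \<in> M"
        using \<tau>_feasible by (auto simp: S_def m_def)
    qed
    show "r * card {z\<in>T - set xs. \<tau> z - 1 < t} \<le> t" if "t \<le> length xs" for t
    proof -
      have "\<tau> z - 1 < t \<longleftrightarrow> \<tau> z \<le> t" if "z \<in> B" for z
        using \<tau>_pos[OF that] by arith
      then have "{z\<in>T - set xs. \<tau> z - 1 < t} = {z\<in>B. \<tau> z \<le> t}"
        unfolding B_def by blast
      then show ?thesis using count that by (simp add: m_def)
    qed
  qed
qed

lemma greedy_run_approx:
  fixes r :: real
  assumes fin: "finite U" and ms: "monotone_submodular U f" and f_empty: "0 \<le> f {}"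
    and gr: "greedy_run U M f xs"
    and down: "\<And>A B. A \<in> M \<Longrightarrow> B \<subseteq> A \<Longrightarrow> B \<in> M" and empty: "{} \<in> M"
    and r: "0 < r"
    and exchange: "\<And>A B. A \<in> M \<Longrightarrow> B \<subseteq> T - A \<Longrightarrow> \<forall>z\<in>B. insert z A \<notin> M \<Longrightarrow>
      r * card B \<le> card A"
    and T: "T \<subseteq> U"
  shows "r * f T \<le> (r + 1) * f (set xs)"
proof -
  have finT: "finite T" using fin T by (rule finite_subset[rotated])
  have S: "set xs \<subseteq> U" by (rule greedy_run_subset[OF gr])
  obtain g where g: "\<forall>z\<in>T - set xs. g z < length xs \<and> insert z (set (take (g z) xs)) \<in> M"
    and ranks: "\<And>t. t \<le> length xs \<Longrightarrow> r * card {z\<in>T - set xs. g z < t} \<le> t"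
    by (rule greedy_run_blocking_ranks[OF gr _ empty r _ T]) (auto intro: down exchange)
  have "f T \<le> f (set xs \<union> T)"
    using S T by (intro monotone_submodular_mono[OF ms]) auto
  also have "\<dots> \<le> f (set xs) + (\<Sum>z\<in>T - set xs. f (insert z (set xs)) - f (set xs))"
    by (rule monotone_submodular_union_le[OF ms finT T S])
  also have "\<dots> \<le> f (set xs) + (\<Sum>z\<in>T - set xs. greedy_gain f xs (g z))"
    using greedy_gain_ge[OF ms gr, of "g _" "length xs"] g T by (auto intro!: sum_mono)
  finally have "r * f T \<le> r * f (set xs) + r * (\<Sum>z\<in>T - set xs. greedy_gain f xs (g z))"
    using r by (simp add: distrib_left[symmetric])
  also have "r * (\<Sum>z\<in>T - set xs. greedy_gain f xs (g z)) \<le> (\<Sum>i<length xs. greedy_gain f xs i)"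
    using finT g ranks greedy_gain_antimono[OF ms gr down] greedy_gain_nonneg[OF ms gr]
    by (intro sum_antimono_at_ranks_le) auto
  finally show ?thesis using f_empty by (simp add: sum_greedy_gain algebra_simps)
qed

lemma greedy_queries_le:
  assumes "finite U" "set xs \<subseteq> U" "real (length xs) \<le> K"
  shows "real (greedy_queries U xs) \<le> 2 * real (card U) * K"
proof (cases "xs = []")
  case True
  then show ?thesis using assms(3) by (simp add: greedy_queries_def)
next
  case False
  then have "1 \<le> card U" using assms(1,2) by (auto simp: Suc_le_eq card_gt_0_iff)
  have "greedy_queries U xs \<le> (\<Sum>i<length xs. card U + 1)"
    unfolding greedy_queries_def using assms(1) by (intro sum_mono add_right_mono card_mono) auto
  then have "real (greedy_queries U xs) \<le> real (length xs * (card U + 1))"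
    by (simp only: of_nat_le_iff) simp
  also have "\<dots> = real (length xs) * (real (card U) + 1)" by (simp add: algebra_simps)
  also have "\<dots> \<le> K * (2 * real (card U))"
    using assms(3) \<open>1 \<le> card U\<close> by (intro mult_mono) auto
  finally show ?thesis by (simp add: ac_simps)
qed

lemma fair_greedy_approx:
  fixes U :: "'a set" and N :: nat and Uc :: "nat \<Rightarrow> 'a set"
    and \<epsilon> \<kappa> :: real and l u :: "nat \<Rightarrow> real"
  defines "M \<equiv> fair_sets U N Uc (\<kappa> / \<epsilon>) (\<lambda>c. l c / \<epsilon>) (\<lambda>c. u c / \<epsilon>)"
  assumes fin: "finite U" and part: "is_partition U N Uc" and ms: "monotone_submodular U f"
    and nonneg: "\<forall>S\<subseteq>U. 0 \<le> f S" and eps: "0 < \<epsilon>" "\<epsilon> < 1"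
    and gr: "greedy_run U M f xs" and empty: "{} \<in> M" and T: "T \<in> fair_sets U N Uc \<kappa> l u"
  shows "(1 - \<epsilon>) * f T \<le> f (set xs)"
proof -
  have down: "\<And>A B. A \<in> M \<Longrightarrow> B \<subseteq> A \<Longrightarrow> B \<in> M"
    unfolding M_def using fair_sets_downward_closed fin by blast
  have exchange: "\<And>A B. A \<in> M \<Longrightarrow> B \<subseteq> T - A \<Longrightarrow> \<forall>z\<in>B. insert z A \<notin> M \<Longrightarrow>
      (1 / \<epsilon> - 1) * card B \<le> card A"
    unfolding M_def using card_blocked_le[OF part fin eps(1) _ T] by blast
  have TU: "T \<subseteq> U" using T by (simp add: fair_sets_def)
  have "(1 / \<epsilon> - 1) * f T \<le> (1 / \<epsilon> - 1 + 1) * f (set xs)"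
    by (rule greedy_run_approx[OF fin ms _ gr _ empty _ _ TU])
      (use nonneg eps in \<open>auto intro: down exchange\<close>)
  then have "\<epsilon> * ((1 / \<epsilon> - 1) * f T) \<le> \<epsilon> * ((1 / \<epsilon> - 1 + 1) * f (set xs))"
    using eps by (intro mult_left_mono) auto
  then show ?thesis using eps by (simp add: algebra_simps)
qed

theorem theorem3:
  shows "\<exists>C::real. \<forall>(U::'a set) N Uc (\<kappa>::nat) (l::nat \<Rightarrow> nat) (u::nat \<Rightarrow> nat)
            (f::'a set \<Rightarrow> real) (\<epsilon>::real) xs.
     finite U \<and> is_partition U N Uc \<and> monotone_submodular U f \<and>
     (\<forall>S\<subseteq>U. f S \<ge> 0) \<and>
     (\<Sum>c<N. u c) \<ge> \<kappa> \<and>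
     fair_sets U N Uc (real \<kappa>) (\<lambda>c. real (l c)) (\<lambda>c. real (u c)) \<noteq> {} \<and>
     0 < \<epsilon> \<and> \<epsilon> < 1 \<and>
     greedy_run U (fair_sets U N Uc (real \<kappa> / \<epsilon>) (\<lambda>c. real (l c) / \<epsilon>) (\<lambda>c. real (u c) / \<epsilon>)) f xs
     \<longrightarrow>
       (\<forall>T \<in> fair_sets U N Uc (real \<kappa>) (\<lambda>c. real (l c)) (\<lambda>c. real (u c)).
           f (set xs) \<ge> (1 - \<epsilon>) * f T) \<and>
       (\<forall>c<N. real (card (set xs \<inter> Uc c)) \<le> real (u c) / \<epsilon>) \<and>
       (\<Sum>c<N. max (real (card (set xs \<inter> Uc c))) (real (l c) / \<epsilon>)) \<le> real \<kappa> / \<epsilon> \<and>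
       real (greedy_queries U xs) \<le> C * real (card U) * real \<kappa> / \<epsilon>"
proof (intro exI[of _ 2] allI impI, elim conjE, goal_cases)
  case (1 U N Uc \<kappa> l u f \<epsilon> xs)
  note fin = \<open>finite U\<close> and part = \<open>is_partition U N Uc\<close> and ms = \<open>monotone_submodular U f\<close>
    and eps = \<open>0 < \<epsilon>\<close> \<open>\<epsilon> < 1\<close>
  let ?Fair = "fair_sets U N Uc (real \<kappa>) (\<lambda>c. real (l c)) (\<lambda>c. real (u c))"
  let ?Scaled = "fair_sets U N Uc (real \<kappa> / \<epsilon>) (\<lambda>c. real (l c) / \<epsilon>) (\<lambda>c. real (u c) / \<epsilon>)"
  have gr: "greedy_run U ?Scaled f xs" by fact
  obtain T0 where "T0 \<in> ?Fair" using \<open>?Fair \<noteq> {}\<close> by blast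
  then have empty: "{} \<in> ?Scaled"
    using fair_sets_downward_closed[OF fair_sets_scale[of T0] _ fin] eps by simp
  have out: "set xs \<in> ?Scaled" using greedy_run_prefix_in[OF gr empty, of "length xs"] by simp
  have approx: "(1 - \<epsilon>) * f T \<le> f (set xs)" if "T \<in> ?Fair" for T
    using fair_greedy_approx[OF fin part ms _ eps gr empty that] \<open>\<forall>S\<subseteq>U. f S \<ge> 0\<close> by simp
  have "real (length xs) \<le> real \<kappa> / \<epsilon>"
    using card_le_of_fair_sets[OF out part fin] distinct_card[OF greedy_run_distinct[OF gr]] by simp
  then have queries: "real (greedy_queries U xs) \<le> 2 * real (card U) * real \<kappa> / \<epsilon>"
    using greedy_queries_le[OF fin greedy_run_subset[OF gr]] by fastforce
  show ?case using approx queries out by (simp add: fair_sets_def)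
qed

end
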